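(* Let $a\neq0$ and $b$ be constants, $I$ an open interval on which $1-az-b>0$, and $\lambda(z)=\sqrt{1-az-b}$ on $I$. Then for either sign $\pm$ and every $c\in I$, the anti-invariant immersion $f_c:\mathbb{R}^2\to\tilde M(1-\lambda^2,2(1\pm\lambda))$, $f_c(x,y)=(x,y,c)$, is not proper biharmonic; equivalently, $\lambda\lambda''-2(\lambda')^2-8\lambda^2(1\pm\lambda)^2\neq0$ at every $z=c\in I$.
   Context: Definition of $\tilde M(1-\lambda^2,2(1\pm\lambda))$: Let $\lambda:I\to\mathbb{R}$ be a non-constant positive smooth function on an open interval $I$, $\lambda'=d\lambda/dz$. On $\tilde M^3=\mathbb{R}^2\times I\subset\mathbb{R}^3$ with coordinates $(x,y,z)$ consider the vector fields $e_1=\partial_x$, $e_2=\partial_y$, $e_3=(\pm 2y+f(z))\partial_x+\big(2\lambda x-\frac{\lambda'}{2\lambda}y+h(z)\big)\partial_y+\partial_z$, where $f,h$ are arbitrary smooth functions of $z$. Let $g$ be the Riemannian metric with $g(e_i,e_j)=\delta_{ij}$, $\xi=e_1$, $\eta$ the $1$-form dual to $e_1$, and $\phi$ the $(1,1)$-tensor with $\phi e_1=0$, $\phi e_2=\pm e_3$, $\phi e_3=\mp e_2$ (all double signs correspond to the sign in $\pm 2y$). This is a contact metric manifold which is a generalized $(\kappa,\mu)$-manifold with $\kappa=1-\lambda^2$, $\mu=2(1\pm\lambda)$. $\mathbb{R}^2$ carries the metric induced by $f_c$. An isometric immersion is biharmonic if $\tau_2(f)=-\Delta_f\tau(f)+\mathrm{trace}\,\tilde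 R(\tau(f),df)df=0$ ($\tau(f)=2H$, $H$ the mean curvature vector), and proper biharmonic if biharmonic and not minimal. *)

theory Defs
  imports "HOL-Analysis.Analysis"
begin

text \<open>Points of R^3 with coordinates (x,y,z); vectors are given by their components
  indexed by 0,1,2 (only indices below 3 are meaningful).\<close>

type_synonym pt = "real \<times> real \<times> real"

definition coord :: "nat \<Rightarrow> pt \<Rightarrow> real" where
  "coord k p = (case p of (x, y, z) \<Rightarrow> if k = 0 then x else if k = 1 then y else z)"

definition smooth_on :: "real set \<Rightarrow> (real \<Rightarrow> real) \<Rightarrow> bool" where
  "smooth_on I g \<longleftrightarrow> (\<forall>n. ((deriv ^^ n) g) differentiable_on I)"

definition pd3 :: "nat \<Rightarrow> (pt \<Rightarrow> real) \<Rightarrow> pt \<Rightarrow> real" where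
  "pd3 k u p = (case p of (x, y, z) \<Rightarrow>
     if k = 0 then deriv (\<lambda>t. u (t, y, z)) x
     else if k = 1 then deriv (\<lambda>t. u (x, t, z)) y
     else deriv (\<lambda>t. u (x, y, t)) z)"

definition pd2 :: "nat \<Rightarrow> (real \<times> real \<Rightarrow> real) \<Rightarrow> real \<times> real \<Rightarrow> real" where
  "pd2 k u q = (case q of (x, y) \<Rightarrow>
     if k = 0 then deriv (\<lambda>t. u (t, y)) x else deriv (\<lambda>t. u (x, t)) y)"

definition vderiv :: "(pt \<Rightarrow> nat \<Rightarrow> real) \<Rightarrow> (pt \<Rightarrow> real) \<Rightarrow> pt \<Rightarrow> real" where
  "vderiv X u p = (\<Sum>k<3. X p k * pd3 k u p)"

definition lie :: "(pt \<Rightarrow> nat \<Rightarrow> real) \<Rightarrow> (pt \<Rightarrow> nat \<Rightarrow> real) \<Rightarrow> pt \<Rightarrow> nat \<Rightarrow> real" where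
  "lie X Y p k = vderiv X (\<lambda>q. Y q k) p - vderiv Y (\<lambda>q. X q k) p"

text \<open>A frame E (E i p k = k-th coordinate component of e_(i+1) at p) which is declared
  orthonormal, i.e. defines the Riemannian metric g(e_i,e_j) = delta_ij.
  fcoef gives the components of a vector with respect to the frame.\<close>
definition fcoef :: "(nat \<Rightarrow> pt \<Rightarrow> nat \<Rightarrow> real) \<Rightarrow> pt \<Rightarrow> (nat \<Rightarrow> real) \<Rightarrow> nat \<Rightarrow> real" where
  "fcoef E p v = (THE a. (\<forall>k<3. v k = (\<Sum>i<3. a i * E i p k)) \<and> (\<forall>i. 3 \<le> i \<longrightarrow> a i = 0))"

definition cstr :: "(nat \<Rightarrow> pt \<Rightarrow> nat \<Rightarrow> real) \<Rightarrow> nat \<Rightarrow> nat \<Rightarrow> nat \<Rightarrow> pt \<Rightarrow> real" where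
  "cstr E i j k p = fcoef E p (lie (E i) (E j) p) k"

text \<open>Levi-Civita connection of g (Koszul formula for an orthonormal frame):
  nabla_{e_i} e_j = sum_k Gam i j k e_k.\<close>
definition Gam :: "(nat \<Rightarrow> pt \<Rightarrow> nat \<Rightarrow> real) \<Rightarrow> nat \<Rightarrow> nat \<Rightarrow> nat \<Rightarrow> pt \<Rightarrow> real" where
  "Gam E i j k p = (cstr E i j k p - cstr E j k i p + cstr E k i j p) / 2"

text \<open>Riemann curvature R(X,Y) = [nabla_X, nabla_Y] - nabla_[X,Y]:
  R(e_i,e_j)e_l = sum_n Rm i j l n e_n.\<close>
definition Rm :: "(nat \<Rightarrow> pt \<Rightarrow> nat \<Rightarrow> real) \<Rightarrow> nat \<Rightarrow> nat \<Rightarrow> nat \<Rightarrow> nat \<Rightarrow> pt \<Rightarrow> real" where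
  "Rm E i j l n p =
     vderiv (E i) (\<lambda>q. Gam E j l n q) p - vderiv (E j) (\<lambda>q. Gam E i l n q) p
     + (\<Sum>m<3. Gam E j l m p * Gam E i m n p - Gam E i l m p * Gam E j m n p
               - cstr E i j m p * Gam E m l n p)"

definition curv :: "(nat \<Rightarrow> pt \<Rightarrow> nat \<Rightarrow> real) \<Rightarrow> pt \<Rightarrow> (nat \<Rightarrow> real) \<Rightarrow> (nat \<Rightarrow> real)
                    \<Rightarrow> (nat \<Rightarrow> real) \<Rightarrow> nat \<Rightarrow> real" where
  "curv E p X Y Z n = (\<Sum>i<3. \<Sum>j<3. \<Sum>l<3. X i * Y j * Z l * Rm E i j l n p)"

text \<open>Maps F from R^2 into R^3; sections along F are given by frame components
  (V u = sum_j V u j e_j(F u)). dFc a u = frame components of dF(d/du_a).\<close>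
definition dFc :: "(nat \<Rightarrow> pt \<Rightarrow> nat \<Rightarrow> real) \<Rightarrow> (real \<times> real \<Rightarrow> pt) \<Rightarrow> nat \<Rightarrow> real \<times> real \<Rightarrow> nat \<Rightarrow> real" where
  "dFc E F a u = fcoef E (F u) (\<lambda>k. pd2 a (\<lambda>q. coord k (F q)) u)"

definition cov :: "(nat \<Rightarrow> pt \<Rightarrow> nat \<Rightarrow> real) \<Rightarrow> (real \<times> real \<Rightarrow> pt) \<Rightarrow> nat
                   \<Rightarrow> (real \<times> real \<Rightarrow> nat \<Rightarrow> real) \<Rightarrow> real \<times> real \<Rightarrow> nat \<Rightarrow> real" where
  "cov E F a V u n = pd2 a (\<lambda>q. V q n) u
      + (\<Sum>i<3. \<Sum>j<3. dFc E F a u i * V u j * Gam E i j n (F u))"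

definition hm :: "(nat \<Rightarrow> pt \<Rightarrow> nat \<Rightarrow> real) \<Rightarrow> (real \<times> real \<Rightarrow> pt) \<Rightarrow> nat \<Rightarrow> nat \<Rightarrow> real \<times> real \<Rightarrow> real" where
  "hm E F a b u = (\<Sum>k<3. dFc E F a u k * dFc E F b u k)"

definition hinv :: "(nat \<Rightarrow> pt \<Rightarrow> nat \<Rightarrow> real) \<Rightarrow> (real \<times> real \<Rightarrow> pt) \<Rightarrow> nat \<Rightarrow> nat \<Rightarrow> real \<times> real \<Rightarrow> real" where
  "hinv E F a b u =
     (let d = hm E F 0 0 u * hm E F 1 1 u - hm E F 0 1 u * hm E F 1 0 u in
      if a = 0 \<and> b = 0 then hm E F 1 1 u / d
      else if a = 1 \<and> b = 1 then hm E F 0 0 u / d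
      else - hm E F a b u / d)"

definition Gh :: "(nat \<Rightarrow> pt \<Rightarrow> nat \<Rightarrow> real) \<Rightarrow> (real \<times> real \<Rightarrow> pt) \<Rightarrow> nat \<Rightarrow> nat \<Rightarrow> nat \<Rightarrow> real \<times> real \<Rightarrow> real" where
  "Gh E F c a b u = (\<Sum>d<2. hinv E F c d u *
      (pd2 a (hm E F d b) u + pd2 b (hm E F d a) u - pd2 d (hm E F a b) u)) / 2"

definition tension :: "(nat \<Rightarrow> pt \<Rightarrow> nat \<Rightarrow> real) \<Rightarrow> (real \<times> real \<Rightarrow> pt) \<Rightarrow> real \<times> real \<Rightarrow> nat \<Rightarrow> real" where
  "tension E F u n = (\<Sum>a<2. \<Sum>b<2. hinv E F a b u *
      (cov E F a (dFc E F b) u n - (\<Sum>c<2. Gh E F c a b u * dFc E F c u n)))"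

definition rlap :: "(nat \<Rightarrow> pt \<Rightarrow> nat \<Rightarrow> real) \<Rightarrow> (real \<times> real \<Rightarrow> pt)
                    \<Rightarrow> (real \<times> real \<Rightarrow> nat \<Rightarrow> real) \<Rightarrow> real \<times> real \<Rightarrow> nat \<Rightarrow> real" where
  "rlap E F V u n = - (\<Sum>a<2. \<Sum>b<2. hinv E F a b u *
      (cov E F a (cov E F b V) u n - (\<Sum>c<2. Gh E F c a b u * cov E F c V u n)))"

definition bitension :: "(nat \<Rightarrow> pt \<Rightarrow> nat \<Rightarrow> real) \<Rightarrow> (real \<times> real \<Rightarrow> pt) \<Rightarrow> real \<times> real \<Rightarrow> nat \<Rightarrow> real" where
  "bitension E F u n = - rlap E F (tension E F) u n
      + (\<Sum>a<2. \<Sum>b<2. hinv E F a b u *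
           curv E (F u) (tension E F u) (dFc E F a u) (dFc E F b u) n)"

definition biharmonic :: "(nat \<Rightarrow> pt \<Rightarrow> nat \<Rightarrow> real) \<Rightarrow> (real \<times> real \<Rightarrow> pt) \<Rightarrow> bool" where
  "biharmonic E F \<longleftrightarrow> (\<forall>u. \<forall>n<3. bitension E F u n = 0)"

definition minimal :: "(nat \<Rightarrow> pt \<Rightarrow> nat \<Rightarrow> real) \<Rightarrow> (real \<times> real \<Rightarrow> pt) \<Rightarrow> bool" where
  "minimal E F \<longleftrightarrow> (\<forall>u. \<forall>n<3. tension E F u n = 0)"

definition proper_biharmonic :: "(nat \<Rightarrow> pt \<Rightarrow> nat \<Rightarrow> real) \<Rightarrow> (real \<times> real \<Rightarrow> pt) \<Rightarrow> bool" where
  "proper_biharmonic E F \<longleftrightarrow> biharmonic E F \<and> \<not> minimal E F"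

text \<open>The orthonormal frame e_1,e_2,e_3 of M(1-lambda^2, 2(1 +- lambda)); s = +1 or -1
  encodes the double sign.\<close>
definition frameM :: "real \<Rightarrow> (real \<Rightarrow> real) \<Rightarrow> (real \<Rightarrow> real) \<Rightarrow> (real \<Rightarrow> real)
                      \<Rightarrow> nat \<Rightarrow> pt \<Rightarrow> nat \<Rightarrow> real" where
  "frameM s lam f h i p k = (case p of (x, y, z) \<Rightarrow>
     if i = 0 then (if k = 0 then 1 else 0)
     else if i = 1 then (if k = 1 then 1 else 0)
     else if i = 2 then
       (if k = 0 then 2 * s * y + f z
        else if k = 1 then 2 * lam z * x - deriv lam z / (2 * lam z) * y + h z
        else if k = 2 then 1 else 0)
     else 0)"

definition fc :: "real \<Rightarrow> real \<times> real \<Rightarrow> pt" where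
  "fc c u = (case u of (x, y) \<Rightarrow> (x, y, c))"

end

theory Submission
  imports Defs
begin

text \<open>The structure functions of the frame depend on \<open>z\<close> only, and \<open>f\<^sub>c\<close> maps \<open>\<partial>\<^sub>x, \<partial>\<^sub>y\<close> to
  \<open>e\<^sub>1, e\<^sub>2\<close>; so the induced metric is flat and the tension field is the constant multiple
  \<open>\<nabla>\<^bsub>e\<^sub>1\<^esub>e\<^sub>1 + \<nabla>\<^bsub>e\<^sub>2\<^esub>e\<^sub>2 = \<mu> e\<^sub>3\<close>, \<open>\<mu> = \<lambda>'/(2\<lambda>)\<close>. The \<open>e\<^sub>3\<close>-component of the bitension field is then
  \<open>\<mu> (\<mu>' - 2\<mu>\<^sup>2 - 4(\<lambda> \<plusminus> 1)\<^sup>2) = \<mu>/(2\<lambda>\<^sup>2) \<cdot> (\<lambda>\<lambda>'' - 2\<lambda>'\<^sup>2 - 8\<lambda>\<^sup>2(1 \<plusminus> \<lambda>)\<^sup>2)\<close>.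
  For \<open>\<lambda> = \<surd>(1 - az - b)\<close> one has \<open>\<lambda>' = -a/(2\<lambda>)\<close>, so \<open>\<mu> \<noteq> 0\<close> and
  \<open>\<lambda>\<lambda>'' - 2\<lambda>'\<^sup>2 = -3a\<^sup>2/(4\<lambda>\<^sup>2) < 0\<close>; hence the bitension field never vanishes.\<close>

lemma sum_lessThan_2: "(\<Sum>i<(2::nat). F i) = F 0 + (F 1 :: real)"
  by (simp add: eval_nat_numeral)

lemma sum_lessThan_3: "(\<Sum>i<(3::nat). F i) = F 0 + F 1 + (F 2 :: real)"
  by (simp add: eval_nat_numeral)

definition tension_coeff :: "(real \<Rightarrow> real) \<Rightarrow> real \<Rightarrow> real" where
  "tension_coeff lam z = deriv lam z / (2 * lam z)"

lemma frameM_pt: "frameM s lam f h i (x, y, z) k =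
    (if i = 0 then (if k = 0 then 1 else 0)
     else if i = 1 then (if k = 1 then 1 else 0)
     else if i = 2 then
       (if k = 0 then 2 * s * y + f z
        else if k = 1 then 2 * lam z * x - deriv lam z / (2 * lam z) * y + h z
        else if k = 2 then 1 else 0)
     else 0)"
  by (simp add: frameM_def)

lemma frameM_coord_2: "frameM s lam f h i p 2 = (if i = 2 then 1 else 0)"
  by (cases p) (auto simp: frameM_def)

lemma frameM_not_2: "j \<noteq> 2 \<Longrightarrow> frameM s lam f h j q m = (if j = m \<and> m < 2 then 1 else 0)"
  by (cases q) (auto simp: frameM_def)

definition frameM_coords :: "real \<Rightarrow> (real \<Rightarrow> real) \<Rightarrow> (real \<Rightarrow> real) \<Rightarrow> (real \<Rightarrow> real)
                            \<Rightarrow> pt \<Rightarrow> (nat \<Rightarrow> real) \<Rightarrow> nat \<Rightarrow> real" where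
  "frameM_coords s lam f h p v = (\<lambda>k. case p of (x, y, z) \<Rightarrow>
     if k = 0 then v 0 - v 2 * (2 * s * y + f z)
     else if k = 1 then v 1 - v 2 * (2 * lam z * x - deriv lam z / (2 * lam z) * y + h z)
     else if k = 2 then v 2 else 0)"

lemma fcoef_frameM: "fcoef (frameM s lam f h) p v = frameM_coords s lam f h p v"
proof -
  obtain x y z where p: "p = (x, y, z)" by (cases p) auto
  let ?P = "\<lambda>a. (\<forall>k<3. v k = (\<Sum>i<3. a i * frameM s lam f h i p k)) \<and> (\<forall>i. 3 \<le> i \<longrightarrow> a i = 0)"
  have "?P (frameM_coords s lam f h p v)"
  proof (intro conjI allI impI)
    fix k :: nat assume "k < 3"
    then show "v k = (\<Sum>i<3. frameM_coords s lam f h p v i * frameM s lam f h i p k)"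
      by (auto simp: sum_lessThan_3 p frameM_coords_def frameM_pt less_Suc_eq numeral_3_eq_3)
  qed (simp add: frameM_coords_def p)
  moreover have "a = frameM_coords s lam f h p v" if "?P a" for a
  proof
    fix k :: nat
    have "v k = (\<Sum>i<3. a i * frameM s lam f h i p k)" if "k < 3" for k
      using \<open>?P a\<close> that by blast
    from this[of 0] this[of 1] this[of 2] \<open>?P a\<close>
    show "a k = frameM_coords s lam f h p v k"
      by (auto simp: sum_lessThan_3 p frameM_pt frameM_coords_def)
  qed
  ultimately show ?thesis
    unfolding fcoef_def by (rule the_equality)
qed

lemma pd3_const: "pd3 k (\<lambda>q. c) p = 0"
  by (cases p) (simp add: pd3_def)

lemma pd3_fun_z: "pd3 k (\<lambda>q. g (snd (snd q))) p = (if k < 2 then 0 else deriv g (snd (snd p)))"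
  by (cases p) (auto simp: pd3_def)

lemma deriv_affine: "deriv (\<lambda>t::real. A * t + B) x = A"
  by (rule DERIV_imp_deriv) (auto intro!: derivative_eq_intros)

lemma pd3_frameM:
  assumes "k < 2"
  shows "pd3 k (\<lambda>q. frameM s lam f h j q m) p =
    (if j = 2 \<and> m = 0 \<and> k = 1 then 2 * s
     else if j = 2 \<and> m = 1 \<and> k = 0 then 2 * lam (snd (snd p))
     else if j = 2 \<and> m = 1 \<and> k = 1 then - tension_coeff lam (snd (snd p))
     else 0)"
proof (cases "j = 2")
  case False
  then show ?thesis by (simp add: frameM_not_2 pd3_const)
next
  case True
  obtain x y z where p: "p = (x, y, z)" by (cases p) auto
  have "deriv (\<lambda>t. 2 * s * t + f z) y = 2 * s"
    by (rule deriv_affine)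
  moreover have "deriv (\<lambda>t. 2 * lam z * t - deriv lam z / (2 * lam z) * y + h z) x = 2 * lam z"
    using deriv_affine[of "2 * lam z" "h z - deriv lam z / (2 * lam z) * y"] by (simp add: algebra_simps)
  moreover have "deriv (\<lambda>t. 2 * lam z * x - deriv lam z / (2 * lam z) * t + h z) y = - tension_coeff lam z"
    using deriv_affine[of "- tension_coeff lam z" "2 * lam z * x + h z"]
    by (simp add: algebra_simps tension_coeff_def)
  ultimately show ?thesis
    using assms True
    by (cases "m = 0 \<or> m = 1") (auto simp: p pd3_def frameM_pt less_2_cases_iff)
qed

definition cstrM :: "real \<Rightarrow> (real \<Rightarrow> real) \<Rightarrow> nat \<Rightarrow> nat \<Rightarrow> nat \<Rightarrow> real \<Rightarrow> real" where
  "cstrM s lam i j k z =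
    (if i = 0 \<and> j = 2 \<and> k = 1 then 2 * lam z
     else if i = 2 \<and> j = 0 \<and> k = 1 then - 2 * lam z
     else if i = 1 \<and> j = 2 \<and> k = 0 then 2 * s
     else if i = 2 \<and> j = 1 \<and> k = 0 then - 2 * s
     else if i = 1 \<and> j = 2 \<and> k = 1 then - tension_coeff lam z
     else if i = 2 \<and> j = 1 \<and> k = 1 then tension_coeff lam z
     else 0)"

lemma cstr_frameM: "cstr (frameM s lam f h) i j k p = cstrM s lam i j k (snd (snd p))"
proof -
  obtain x y z where p: "p = (x, y, z)" by (cases p) auto
  have "vderiv (frameM s lam f h i) (\<lambda>q. frameM s lam f h j q m) p =
      frameM s lam f h i p 0 * pd3 0 (\<lambda>q. frameM s lam f h j q m) p
    + frameM s lam f h i p 1 * pd3 1 (\<lambda>q. frameM s lam f h j q m) p" if "i \<noteq> j" for i j m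
    using that by (cases "j = 2") (auto simp: vderiv_def sum_lessThan_3 frameM_coord_2 frameM_not_2 pd3_const)
  then show ?thesis
    by (cases "i = j")
      (auto simp: cstr_def lie_def fcoef_frameM frameM_coords_def cstrM_def pd3_frameM p frameM_pt
         tension_coeff_def)
qed

definition GamM :: "real \<Rightarrow> (real \<Rightarrow> real) \<Rightarrow> nat \<Rightarrow> nat \<Rightarrow> nat \<Rightarrow> real \<Rightarrow> real" where
  "GamM s lam i j k z = (cstrM s lam i j k z - cstrM s lam j k i z + cstrM s lam k i j z) / 2"

lemma Gam_frameM: "Gam (frameM s lam f h) i j k p = GamM s lam i j k (snd (snd p))"
  by (simp add: Gam_def GamM_def cstr_frameM)

lemma vderiv_Gam_frameM:
  "vderiv (frameM s lam f h i) (Gam (frameM s lam f h) j l n) p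
     = (if i = 2 then deriv (GamM s lam j l n) (snd (snd p)) else 0)"
proof -
  have "Gam (frameM s lam f h) j l n = (\<lambda>q. GamM s lam j l n (snd (snd q)))"
    by (simp add: Gam_frameM fun_eq_iff)
  then show ?thesis
    by (simp add: vderiv_def sum_lessThan_3 pd3_fun_z frameM_coord_2)
qed

lemma fc_z: "snd (snd (fc c u)) = c"
  by (cases u) (simp add: fc_def)

lemma pd2_const: "pd2 k (\<lambda>q. c) u = 0"
  by (cases u) (simp add: pd2_def)

lemma dFc_fc: "a < 2 \<Longrightarrow> dFc (frameM s lam f h) (fc c) a u = (\<lambda>k. if k = a then 1 else 0)"
proof -
  assume a: "a < 2"
  obtain x y where u: "u = (x, y)" by (cases u) auto
  have "(\<lambda>k. pd2 a (\<lambda>q. coord k (fc c q)) u) = (\<lambda>k. if k = a then 1 else 0)"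
  proof
    fix k :: nat
    have "k = 0 \<or> k = 1 \<or> k \<ge> 2" by auto
    then show "pd2 a (\<lambda>q. coord k (fc c q)) u = (if k = a then 1 else 0)"
      using a by (auto simp: pd2_def u coord_def fc_def less_2_cases_iff)
  qed
  then show ?thesis
    using a by (cases "fc c u") (auto simp: dFc_def fcoef_frameM frameM_coords_def)
qed

lemma hm_fc: "a < 2 \<Longrightarrow> b < 2 \<Longrightarrow> hm (frameM s lam f h) (fc c) a b = (\<lambda>u. if a = b then 1 else 0)"
  by (auto simp: fun_eq_iff hm_def dFc_fc sum_lessThan_3)

lemma hinv_fc: "a < 2 \<Longrightarrow> b < 2 \<Longrightarrow> hinv (frameM s lam f h) (fc c) a b u = (if a = b then 1 else 0)"
  by (auto simp: hinv_def hm_fc Let_def less_2_cases_iff)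

lemma Gh_fc: "a < 2 \<Longrightarrow> b < 2 \<Longrightarrow> Gh (frameM s lam f h) (fc c) e a b u = 0"
  by (simp add: Gh_def sum_lessThan_2 hm_fc pd2_const)

lemma tension_fc: "tension (frameM s lam f h) (fc c) = (\<lambda>u n. if n = 2 then tension_coeff lam c else 0)"
  by (intro ext)
    (simp add: tension_def sum_lessThan_2 sum_lessThan_3 hinv_fc Gh_fc cov_def dFc_fc pd2_const
       Gam_frameM fc_z GamM_def cstrM_def)

lemma cov_fc_const:
  "b < 2 \<Longrightarrow> cov (frameM s lam f h) (fc c) b (\<lambda>u. w) = (\<lambda>u n. \<Sum>j<3. w j * GamM s lam b j n c)"
  by (intro ext) (auto simp: cov_def pd2_const dFc_fc sum_lessThan_3 Gam_frameM fc_z less_2_cases_iff)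

lemma bitension_fc_2:
  "bitension (frameM s lam f h) (fc c) u 2 =
     tension_coeff lam c * (deriv (tension_coeff lam) c - 2 * (tension_coeff lam c)\<^sup>2 - 4 * (lam c + s)\<^sup>2)"
proof -
  have "GamM s lam 0 0 2 = (\<lambda>z. 0)" "GamM s lam 1 1 2 = tension_coeff lam"
    by (simp_all add: fun_eq_iff GamM_def cstrM_def)
  then show ?thesis
    apply (simp add: bitension_def rlap_def tension_fc cov_fc_const sum_lessThan_2 sum_lessThan_3
        hinv_fc Gh_fc curv_def dFc_fc Rm_def vderiv_Gam_frameM cstr_frameM)
    apply (simp add: Gam_frameM fc_z)
    apply (simp add: GamM_def cstrM_def)
    apply (simp add: field_simps power2_eq_square)
    done
qed

lemma deriv_tension_coeff:
  fixes lam :: "real \<Rightarrow> real"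
  assumes "lam differentiable (at c)" "deriv lam differentiable (at c)" "lam c \<noteq> 0"
  shows "deriv (tension_coeff lam) c = (lam c * deriv (deriv lam) c - (deriv lam c)\<^sup>2) / (2 * (lam c)\<^sup>2)"
proof (rule DERIV_imp_deriv)
  have "(lam has_real_derivative deriv lam c) (at c)"
    "(deriv lam has_real_derivative deriv (deriv lam) c) (at c)"
    using assms(1,2) by (simp_all add: DERIV_deriv_iff_real_differentiable)
  then show "(tension_coeff lam has_real_derivative
      (lam c * deriv (deriv lam) c - (deriv lam c)\<^sup>2) / (2 * (lam c)\<^sup>2)) (at c)"
    unfolding tension_coeff_def [abs_def] using assms(3)
    by (auto intro!: derivative_eq_intros simp: field_simps power2_eq_square)
qed

lemma bitension_fc_2_eq_lam_derivs:
  fixes lam :: "real \<Rightarrow> real"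
  assumes "lam differentiable (at c)" "deriv lam differentiable (at c)" "lam c \<noteq> 0"
    and "s = 1 \<or> s = -1"
  shows "bitension (frameM s lam f h) (fc c) u 2 =
    tension_coeff lam c / (2 * (lam c)\<^sup>2) * (lam c * deriv (deriv lam) c - 2 * (deriv lam c)\<^sup>2
      - 8 * (lam c)\<^sup>2 * (1 + s * lam c)\<^sup>2)"
proof -
  have "(lam c + s)\<^sup>2 = (1 + s * lam c)\<^sup>2"
    using assms(4) by (auto simp: power2_eq_square algebra_simps)
  then have "bitension (frameM s lam f h) (fc c) u 2 = tension_coeff lam c *
      (deriv (tension_coeff lam) c - 2 * (tension_coeff lam c)\<^sup>2 - 4 * (1 + s * lam c)\<^sup>2)"
    by (simp add: bitension_fc_2)
  also have "\<dots> = tension_coeff lam c / (2 * (lam c)\<^sup>2) * (lam c * deriv (deriv lam) c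
      - 2 * (deriv lam c)\<^sup>2 - 8 * (lam c)\<^sup>2 * (1 + s * lam c)\<^sup>2)"
    using assms(3) unfolding deriv_tension_coeff[OF assms(1-3)]
    by (simp add: tension_coeff_def field_simps power2_eq_square)
  finally show ?thesis .
qed

context
  fixes a b :: real and I :: "real set" and lam :: "real \<Rightarrow> real"
  assumes I_open: "open I"
    and radicand_pos: "\<forall>z\<in>I. 1 - a * z - b > 0"
    and lam_sqrt: "\<forall>z\<in>I. lam z = sqrt (1 - a * z - b)"
begin

lemma sqrt_affine_pos: "z \<in> I \<Longrightarrow> lam z > 0"
  using radicand_pos lam_sqrt by simp

lemma sqrt_affine_has_derivative:
  assumes "z \<in> I"
  shows "(lam has_real_derivative - a / (2 * lam z)) (at z)"
proof -
  have "((\<lambda>z. sqrt (1 - a * z - b)) has_real_derivative - a / (2 * lam z)) (at z)"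
    using assms radicand_pos lam_sqrt
    by (auto intro!: derivative_eq_intros simp: field_simps)
  then show ?thesis
    by (rule has_field_derivative_transform_within_open[OF _ I_open assms]) (simp add: lam_sqrt)
qed

lemma sqrt_affine_has_second_derivative:
  assumes "c \<in> I"
  shows "(deriv lam has_real_derivative - a\<^sup>2 / (4 * (lam c)^3)) (at c)"
proof -
  have "((\<lambda>z. - a / (2 * lam z)) has_real_derivative - a\<^sup>2 / (4 * (lam c)^3)) (at c)"
    using sqrt_affine_has_derivative[OF assms] sqrt_affine_pos[OF assms]
    by (auto intro!: derivative_eq_intros simp: field_simps power2_eq_square power3_eq_cube)
  then show ?thesis
    by (rule has_field_derivative_transform_within_open[OF _ I_open assms])
      (simp add: DERIV_imp_deriv[OF sqrt_affine_has_derivative])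
qed

lemma sqrt_affine_second_order_expr:
  assumes "c \<in> I"
  shows "lam c * deriv (deriv lam) c - 2 * (deriv lam c)\<^sup>2 = - 3 * a\<^sup>2 / (4 * (lam c)\<^sup>2)"
  using sqrt_affine_pos[OF assms]
  by (simp add: DERIV_imp_deriv[OF sqrt_affine_has_derivative[OF assms]]
      DERIV_imp_deriv[OF sqrt_affine_has_second_derivative[OF assms]]
      field_simps power2_eq_square power3_eq_cube)

end

theorem mainTheorem5:
  fixes a b c s :: real and I :: "real set" and f h lam :: "real \<Rightarrow> real"
  assumes "a \<noteq> 0"
    and "open I" and "is_interval I"
    and "\<forall>z\<in>I. 1 - a * z - b > 0"
    and "\<forall>z\<in>I. lam z = sqrt (1 - a * z - b)"
    and "s = 1 \<or> s = -1"
    and "smooth_on I f" and "smooth_on I h"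
    and "c \<in> I"
  shows "\<not> proper_biharmonic (frameM s lam f h) (fc c)
    \<and> lam c * deriv (deriv lam) c - 2 * (deriv lam c)\<^sup>2
        - 8 * (lam c)\<^sup>2 * (1 + s * lam c)\<^sup>2 \<noteq> 0"
proof -
  note D1 = sqrt_affine_has_derivative[OF assms(2,4,5,9)]
  note D2 = sqrt_affine_has_second_derivative[OF assms(2,4,5,9)]
  have diff1: "lam differentiable (at c)" and diff2: "deriv lam differentiable (at c)"
    using D1 D2 real_differentiable_def by blast+
  have pos: "lam c > 0"
    using sqrt_affine_pos[OF assms(2,4,5,9)] .
  have "- 3 * a\<^sup>2 / (4 * (lam c)\<^sup>2) < 0" "8 * (lam c)\<^sup>2 * (1 + s * lam c)\<^sup>2 \<ge> 0"
    using assms(1) pos by (simp_all add: divide_neg_pos)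
  then have expr_neg: "lam c * deriv (deriv lam) c - 2 * (deriv lam c)\<^sup>2
      - 8 * (lam c)\<^sup>2 * (1 + s * lam c)\<^sup>2 < 0"
    unfolding sqrt_affine_second_order_expr[OF assms(2,4,5,9)] by linarith
  have "tension_coeff lam c \<noteq> 0"
    using assms(1) pos by (simp add: tension_coeff_def DERIV_imp_deriv[OF D1])
  then have "bitension (frameM s lam f h) (fc c) (0, 0) 2 \<noteq> 0"
    using expr_neg pos
    by (simp add: bitension_fc_2_eq_lam_derivs[OF diff1 diff2 _ assms(6)])
  then have "\<not> biharmonic (frameM s lam f h) (fc c)"
    unfolding biharmonic_def by (metis Suc_less_eq numeral_2_eq_2 numeral_3_eq_3 zero_less_Suc)
  with expr_neg show ?thesis
    by (simp add: proper_biharmonic_def)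
qed

end
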